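(* Let $\Omega\subset\mathbb R^n$ be a $C^{1,\operatorname{Dini}}$ domain with $0\in\partial\Omega$, described near $0$ in coordinates $(x',x_n)$ by $B_{R_0}\cap\Omega=\{x_n<\varphi(x')\}$, $B_{R_0}\cap\partial\Omega=\{x_n=\varphi(x')\}$, with $\varphi(0)=0$ and $D'\varphi(0)=0$, so that the outer unit normal satisfies $\nu(0)=e_n=(0,\dots,0,1)$. Assume $R_0<1$, $\sup_{|x'|\le R_0}\sqrt{1+|D'\varphi(x')|^2}\le \tfrac32$, and let $\Lambda:(0,R_0]\to(0,\infty)$ be a non-decreasing function such that $$\sup_{x_1,x_2\in\partial\Omega\cap B_r}|\nu(x_2)-\nu(x_1)|\le\Lambda(r)\quad\text{for every }r\in(0,R_0],$$ and $\Lambda(R_0)<\tfrac1{1000}$. For $0<r\le R_0$ let $a=4\Lambda(r)r$ and $y_0=-a\nu(0)=(0,-a)$. Then for $0<r\le R_0$ the set $\Omega\cap B_{r-a}(y_0)$ is star-shaped with respect to $y_0$, and moreover for every $x\in\partial\Omega\cap B_r$, $$\frac{r\Lambda(r)}{2}\le\langle x-y_0,\nu(x)\rangle\le 10\, r\Lambda(r).$$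
   Context: $B_r$ is the open Euclidean ball of radius $r$ centered at $0$, $B_r(y)$ the one centered at $y$. A $C^{1,\operatorname{Dini}}$ domain is a connected bounded open set whose boundary is locally the graph $x_n=\varphi(x')$ of a function with $|D'\varphi(x_1')-D'\varphi(x_2')|\le\psi(|x_1'-x_2'|)$, $\int_0^2\psi(r)/r\,dr<\infty$, with $\Omega$ lying locally below the graph. The outer unit normal at $(x',\varphi(x'))$ is $\nu=\big(-D'\varphi,1\big)/\sqrt{1+|D'\varphi|^2}$. *)

theory Defs
  imports "HOL-Analysis.Analysis"
begin

text \<open>Points of R^n are modelled as pairs (x', x_n) :: 'a \<times> real, with 'a a Euclidean
  space of dimension n-1. The norm and inner product on the product type are the Euclidean ones.\<close>

definition dini_grad_on :: "'a::euclidean_space set \<Rightarrow> ('a \<Rightarrow> 'a) \<Rightarrow> bool" where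
  "dini_grad_on S D \<longleftrightarrow> (\<exists>\<psi>::real \<Rightarrow> real.
      (\<forall>x1\<in>S. \<forall>x2\<in>S. norm (D x1 - D x2) \<le> \<psi> (norm (x1 - x2))) \<and>
      (\<lambda>r. \<psi> r / r) integrable_on {0..2})"

definition C1_Dini_domain :: "('a::euclidean_space \<times> real) set \<Rightarrow> bool" where
  "C1_Dini_domain \<Omega> \<longleftrightarrow> open \<Omega> \<and> connected \<Omega> \<and> bounded \<Omega> \<and> \<Omega> \<noteq> {} \<and>
     (\<forall>p\<in>frontier \<Omega>. \<exists>T R (\<phi>::'a \<Rightarrow> real) D\<phi>.
        orthogonal_transformation T \<and> R > 0 \<and>
        (\<forall>x'\<in>ball 0 R. (\<phi> has_derivative (\<lambda>h. inner (D\<phi> x') h)) (at x')) \<and>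
        dini_grad_on (ball 0 R) D\<phi> \<and>
        (\<forall>y. norm y < R \<longrightarrow>
            (p + T y \<in> \<Omega> \<longleftrightarrow> snd y < \<phi> (fst y)) \<and>
            (p + T y \<in> frontier \<Omega> \<longleftrightarrow> snd y = \<phi> (fst y))))"

definition graph_normal :: "('a::euclidean_space \<Rightarrow> 'a) \<Rightarrow> 'a \<times> real \<Rightarrow> 'a \<times> real" where
  "graph_normal D\<phi> x = (1 / sqrt (1 + (norm (D\<phi> (fst x)))\<^sup>2)) *\<^sub>R (- D\<phi> (fst x), 1)"

definition star_shaped_wrt :: "'b::real_vector \<Rightarrow> 'b set \<Rightarrow> bool" where
  "star_shaped_wrt y S \<longleftrightarrow> y \<in> S \<and> (\<forall>x\<in>S. closed_segment y x \<subseteq> S)"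

end

theory Submission
  imports Defs
begin

(* Comparing nu with nu(0) = e_n, the oscillation bound gives |D'phi| <= 3 Lambda / 2 at every
   graph point in B_r. Along a ray s |-> (s x', phi (s x')) the squared distance to the origin
   cannot decrease while the point stays in B_r, so the ray from 0 to a graph point of B_r stays
   in B_r, and integrating the gradient bound along it gives |phi x'| <= 3 Lambda |x'| / 2.
   Since <x - y0, nu x> = (x_n + a - <D'phi x', x'>) / sqrt (1 + |D'phi x'|^2), this yields the
   two-sided bound on the boundary. Its positivity says that on a segment from y0 the height of
   the segment above the graph can vanish only while decreasing; as the segment ends in Omega,
   it never leaves Omega. *)

lemma has_real_derivative_along_ray:
  fixes \<phi> :: "'a::real_inner \<Rightarrow> real"
  assumes "(\<phi> has_derivative (\<lambda>h. inner d h)) (at (t *\<^sub>R v))"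
  shows "((\<lambda>s. \<phi> (s *\<^sub>R v)) has_real_derivative inner d v) (at t)"
proof -
  have "((\<lambda>s. s *\<^sub>R v) has_derivative (\<lambda>h. h *\<^sub>R v)) (at t)"
    by (auto intro!: derivative_eq_intros)
  from diff_chain_at[OF this assms] show ?thesis
    by (simp add: has_field_derivative_def o_def mult.commute[of _ "inner d v"])
qed

lemma norm_scaleR_le_of_unit_interval:
  "t \<in> {0..1} \<Longrightarrow> norm (t *\<^sub>R v) \<le> norm v"
  by (simp add: mult_left_le_one_le)

lemma below_level_if_nondecreasing_below:
  fixes f f' :: "real \<Rightarrow> real"
  assumes deriv: "\<And>t. t \<in> {a..b} \<Longrightarrow> (f has_real_derivative f' t) (at t)"
    and mono: "\<And>t. t \<in> {a..b} \<Longrightarrow> f t < c \<Longrightarrow> 0 \<le> f' t"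
    and end_below: "f b < c" and t: "t \<in> {a..b}"
  shows "f t < c"
proof (rule ccontr)
  assume "\<not> f t < c"
  have cont: "continuous_on {a..b} f"
    using deriv by (meson DERIV_isCont continuous_at_imp_continuous_on)
  define S where "S = {a..b} \<inter> f -` {c..}"
  have "compact S"
    unfolding S_def using continuous_closed_preimage[OF cont]
    by (meson bounded_Int bounded_closed_interval closed_atLeastAtMost closed_atLeast compact_eq_bounded_closed)
  moreover have "t \<in> S" using t \<open>\<not> f t < c\<close> by (auto simp: S_def)
  ultimately obtain s where s: "s \<in> S" and s_max: "\<forall>u\<in>S. u \<le> s"
    using compact_attains_sup by blast
  have "s < b" using s end_below by (auto simp: S_def less_eq_real_def)
  then obtain z where z: "s < z" "z < b" and mvt: "f b - f s = (b - s) * f' z"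
    using MVT2[of s b f f'] deriv s by (fastforce simp: S_def)
  have "z \<notin> S" using s_max z by force
  then have "f z < c" using s z by (auto simp: S_def)
  then have "0 \<le> f' z" using mono s z by (auto simp: S_def)
  then have "f s \<le> f b" using mvt \<open>s < b\<close> mult_nonneg_nonneg[of "b - s" "f' z"] by linarith
  then show False using s end_below by (auto simp: S_def)
qed

lemma positive_if_zeros_are_downcrossings:
  fixes f f' :: "real \<Rightarrow> real"
  assumes deriv: "\<And>t. t \<in> {a..b} \<Longrightarrow> (f has_real_derivative f' t) (at t)"
    and down: "\<And>t. t \<in> {a..b} \<Longrightarrow> f t = 0 \<Longrightarrow> f' t < 0"
    and end_pos: "0 < f b" and t: "t \<in> {a..b}"
  shows "0 < f t"
proof (rule ccontr)
  assume "\<not> 0 < f t"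
  have cont: "continuous_on {a..b} f"
    using deriv by (meson DERIV_isCont continuous_at_imp_continuous_on)
  have zero_after: "\<exists>z\<in>{u..b}. f z = 0" if "u \<in> {a..b}" "f u \<le> 0" for u
    using IVT'[of f u 0 b] continuous_on_subset[OF cont, of "{u..b}"] that end_pos by auto
  define Z where "Z = {a..b} \<inter> f -` {0}"
  have "compact Z"
    unfolding Z_def using continuous_closed_preimage[OF cont]
    by (meson bounded_Int bounded_closed_interval closed_atLeastAtMost closed_singleton compact_eq_bounded_closed)
  moreover obtain z where "z \<in> {t..b}" "f z = 0"
    using zero_after[OF t] \<open>\<not> 0 < f t\<close> by auto
  then have "z \<in> Z" using t by (auto simp: Z_def)
  ultimately obtain s where s: "s \<in> Z" and s_max: "\<forall>u\<in>Z. u \<le> s"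
    using compact_attains_sup by blast
  have s_ab: "s \<in> {a..b}" "f s = 0" "s < b" using s end_pos by (auto simp: Z_def less_eq_real_def)
  obtain d where "d > 0" and dec: "\<forall>h>0. h < d \<longrightarrow> f (s + h) < f s"
    using DERIV_neg_dec_right[OF deriv[OF s_ab(1)] down[OF s_ab(1,2)]] by blast
  define h where "h = min (d/2) ((b - s)/2)"
  have h: "0 < h" "h < d" "s + h \<in> {a..b}"
    using \<open>d > 0\<close> s_ab unfolding h_def by (auto simp: min_def field_simps)
  then have "f (s + h) \<le> 0" using dec s_ab by force
  then obtain z where z: "z \<in> {s + h..b}" "f z = 0" using zero_after h by blast
  then have "z \<in> Z" using h by (auto simp: Z_def)
  then show False using s_max z h by fastforce
qed

lemma inner_graph_normal:
  "inner (u, w) (graph_normal D\<phi> x) =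
     (w - inner (D\<phi> (fst x)) u) / sqrt (1 + (norm (D\<phi> (fst x)))\<^sup>2)"
  by (simp add: graph_normal_def inner_commute diff_divide_distrib)

lemma graph_normal_tilt_le:
  assumes "D\<phi> (fst y) = 0"
  shows "norm (D\<phi> (fst x)) / sqrt (1 + (norm (D\<phi> (fst x)))\<^sup>2)
           \<le> norm (graph_normal D\<phi> x - graph_normal D\<phi> y)"
proof -
  let ?s = "sqrt (1 + (norm (D\<phi> (fst x)))\<^sup>2)"
  have "fst (graph_normal D\<phi> x - graph_normal D\<phi> y) = - ((1 / ?s) *\<^sub>R D\<phi> (fst x))"
    using assms by (simp add: graph_normal_def)
  moreover have "norm (- ((1 / ?s) *\<^sub>R D\<phi> (fst x))) = norm (D\<phi> (fst x)) / ?s"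
    by (simp add: divide_inverse_commute)
  moreover have "norm (fst p) \<le> norm p" for p :: "'a \<times> real"
    by (metis prod.collapse norm_fst_le)
  ultimately show ?thesis by metis
qed

locale graph_chart =
  fixes \<Omega> :: "('a::euclidean_space \<times> real) set"
    and \<phi> :: "'a \<Rightarrow> real" and D\<phi> :: "'a \<Rightarrow> 'a" and R0 :: real
  assumes graph_deriv: "\<And>x'. x' \<in> cball 0 R0 \<Longrightarrow> (\<phi> has_derivative (\<lambda>h. inner (D\<phi> x') h)) (at x')"
    and in_chart_iff: "\<And>x. norm x < R0 \<Longrightarrow>
          (x \<in> \<Omega> \<longleftrightarrow> snd x < \<phi> (fst x)) \<and> (x \<in> frontier \<Omega> \<longleftrightarrow> snd x = \<phi> (fst x))"
    and graph_zero: "\<phi> 0 = 0" and grad_zero: "D\<phi> 0 = 0"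
    and slope_le: "\<And>x'. x' \<in> cball 0 R0 \<Longrightarrow> sqrt (1 + (norm (D\<phi> x'))\<^sup>2) \<le> 3/2"
begin

lemma has_real_derivative_graph_ray:
  assumes "norm v \<le> R0" "t \<in> {0..1}"
  shows "((\<lambda>s. \<phi> (s *\<^sub>R v)) has_real_derivative inner (D\<phi> (t *\<^sub>R v)) v) (at t)"
proof -
  have "norm (t *\<^sub>R v) \<le> R0"
    using assms norm_scaleR_le_of_unit_interval by (meson order_trans)
  then show ?thesis by (intro has_real_derivative_along_ray graph_deriv) simp
qed

lemma abs_graph_le_along_ray:
  assumes v: "norm v \<le> R0" and grad: "\<And>t. t \<in> {0<..<1} \<Longrightarrow> norm (D\<phi> (t *\<^sub>R v)) \<le> K"
  shows "\<bar>\<phi> v\<bar> \<le> K * norm v"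
proof -
  obtain z where z: "0 < z" "z < 1" and "\<phi> v = inner (D\<phi> (z *\<^sub>R v)) v"
    using MVT2[of 0 1 "\<lambda>s. \<phi> (s *\<^sub>R v)" "\<lambda>t. inner (D\<phi> (t *\<^sub>R v)) v"]
      has_real_derivative_graph_ray[OF v] by (auto simp: graph_zero)
  then have "\<bar>\<phi> v\<bar> \<le> norm (D\<phi> (z *\<^sub>R v)) * norm v"
    by (simp add: Cauchy_Schwarz_ineq2)
  also have "\<dots> \<le> K * norm v" using grad z by (intro mult_right_mono) auto
  finally show ?thesis .
qed

lemma abs_graph_le:
  assumes v: "norm v \<le> R0"
  shows "\<bar>\<phi> v\<bar> \<le> 9/8 * norm v"
proof (rule abs_graph_le_along_ray[OF v])
  fix t :: real assume "t \<in> {0<..<1}"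
  with v have "sqrt (1 + (norm (D\<phi> (t *\<^sub>R v)))\<^sup>2) \<le> 3/2"
    using norm_scaleR_le_of_unit_interval[of t v] by (intro slope_le) auto
  then have "1 + (norm (D\<phi> (t *\<^sub>R v)))\<^sup>2 \<le> (3/2)\<^sup>2" by (rule sqrt_le_D)
  then have "(norm (D\<phi> (t *\<^sub>R v)))\<^sup>2 \<le> (9/8)\<^sup>2" by (simp add: power2_eq_square)
  then show "norm (D\<phi> (t *\<^sub>R v)) \<le> 9/8" by (rule power2_le_imp_le) simp
qed

end

locale flat_graph_ball = graph_chart +
  fixes r L :: real
  assumes r_pos: "0 < r" and r_le: "r \<le> R0"
    and L_pos: "0 < L" and L_small: "L < 1/4"
    and normal_osc: "\<And>x1 x2. x1 \<in> frontier \<Omega> \<inter> ball 0 r \<Longrightarrow> x2 \<in> frontier \<Omega> \<inter> ball 0 r \<Longrightarrow>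
          norm (graph_normal D\<phi> x2 - graph_normal D\<phi> x1) \<le> L"
begin

lemma graph_point_in_frontier_ball:
  assumes "norm (q, \<phi> q) < r"
  shows "(q, \<phi> q) \<in> frontier \<Omega> \<inter> ball 0 r"
  using assms in_chart_iff[of "(q, \<phi> q)"] r_le by simp

lemma frontier_ball_is_graph:
  assumes "x \<in> frontier \<Omega> \<inter> ball 0 r"
  shows "x = (fst x, \<phi> (fst x))"
  using assms in_chart_iff[of x] r_le by (simp add: prod_eq_iff)

lemma norm_grad_le:
  assumes q: "norm (q, \<phi> q) < r"
  shows "norm (D\<phi> q) \<le> 3/2 * L"
proof -
  let ?s = "sqrt (1 + (norm (D\<phi> q))\<^sup>2)"
  have "(0, 0) \<in> frontier \<Omega> \<inter> ball 0 r"
    using graph_point_in_frontier_ball[of 0] r_pos by (simp add: graph_zero)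
  then have "norm (D\<phi> q) / ?s \<le> L"
    using graph_normal_tilt_le[of D\<phi> "(0, 0)" "(q, \<phi> q)"] grad_zero
      normal_osc graph_point_in_frontier_ball[OF q] by force
  then have "norm (D\<phi> q) \<le> L * ?s" by (simp add: divide_le_eq add_pos_nonneg)
  also have "\<dots> \<le> L * (3/2)"
    using slope_le[of q] norm_fst_le[of q "\<phi> q"] q r_le L_pos by (intro mult_left_mono) auto
  finally show ?thesis by simp
qed

lemma graph_ray_in_ball:
  assumes v: "norm (v, \<phi> v) < r" and s: "s \<in> {0..1}"
  shows "norm (s *\<^sub>R v, \<phi> (s *\<^sub>R v)) < r"
proof -
  let ?u = "norm v"
  define f where "f t = (t * ?u)\<^sup>2 + (\<phi> (t *\<^sub>R v))\<^sup>2" for t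
  have vR: "?u \<le> R0" using norm_fst_le[of v "\<phi> v"] v r_le by linarith
  have norm_sq: "(norm (t *\<^sub>R v, \<phi> (t *\<^sub>R v)))\<^sup>2 = f t" for t
    by (simp add: f_def norm_Pair power_mult_distrib)
  have in_ball_iff: "norm (t *\<^sub>R v, \<phi> (t *\<^sub>R v)) < r \<longleftrightarrow> f t < r\<^sup>2" for t
    unfolding norm_sq[symmetric] using r_pos
    by (meson norm_ge_zero less_imp_le power_strict_mono power_less_imp_less_base zero_less_numeral)
  have "f s < r\<^sup>2"
  proof (rule below_level_if_nondecreasing_below[OF _ _ _ s])
    fix t :: real assume t: "t \<in> {0..1}"
    show "(f has_real_derivative 2 * t * ?u\<^sup>2 + 2 * \<phi> (t *\<^sub>R v) * inner (D\<phi> (t *\<^sub>R v)) v) (at t)"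
      unfolding f_def
      by (rule derivative_eq_intros has_real_derivative_graph_ray[OF vR t] | simp add: power2_eq_square)+
    assume "f t < r\<^sup>2"
    then have "norm (D\<phi> (t *\<^sub>R v)) \<le> 3/2 * L" using in_ball_iff norm_grad_le by blast
    moreover have "\<bar>\<phi> (t *\<^sub>R v)\<bar> \<le> 9/8 * (t * ?u)"
      using abs_graph_le[of "t *\<^sub>R v"] norm_scaleR_le_of_unit_interval[OF t, of v] t vR by simp
    ultimately have "\<bar>\<phi> (t *\<^sub>R v) * inner (D\<phi> (t *\<^sub>R v)) v\<bar> \<le> 9/8 * (t * ?u) * (3/2 * L * ?u)"
      unfolding abs_mult using t
      by (intro mult_mono order_trans[OF Cauchy_Schwarz_ineq2 mult_right_mono]) auto
    also have "\<dots> = (27/16 * L) * (t * ?u\<^sup>2)" by (simp add: power2_eq_square)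
    also have "\<dots> \<le> t * ?u\<^sup>2" using t L_small L_pos by (intro mult_left_le_one_le) auto
    finally show "0 \<le> 2 * t * ?u\<^sup>2 + 2 * \<phi> (t *\<^sub>R v) * inner (D\<phi> (t *\<^sub>R v)) v"
      by linarith
  next
    show "f 1 < r\<^sup>2" using in_ball_iff[of 1] v by simp
  qed
  then show ?thesis using in_ball_iff by blast
qed

lemma abs_graph_le_in_ball:
  assumes v: "norm (v, \<phi> v) < r"
  shows "\<bar>\<phi> v\<bar> \<le> 3/2 * L * norm v"
proof (rule abs_graph_le_along_ray)
  show "norm v \<le> R0" using norm_fst_le[of v "\<phi> v"] v r_le by linarith
  show "norm (D\<phi> (t *\<^sub>R v)) \<le> 3/2 * L" if "t \<in> {0<..<1}" for t
    using that by (intro norm_grad_le graph_ray_in_ball[OF v]) auto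
qed

lemma frontier_support_gap:
  assumes x: "x \<in> frontier \<Omega> \<inter> ball 0 r"
  defines "gap \<equiv> snd x + 4 * L * r - inner (D\<phi> (fst x)) (fst x)"
  shows "L * r \<le> gap" and "gap \<le> 7 * L * r"
proof -
  obtain v where xv: "x = (v, \<phi> v)" using frontier_ball_is_graph[OF x] by blast
  have nx: "norm (v, \<phi> v) < r" using x xv by simp
  have nv: "norm v \<le> r" using norm_fst_le[of v "\<phi> v"] nx by linarith
  have "\<bar>\<phi> v\<bar> \<le> 3/2 * L * norm v" by (rule abs_graph_le_in_ball[OF nx])
  also have "\<dots> \<le> 3/2 * L * r" using nv L_pos by (intro mult_left_mono) auto
  finally have "\<bar>\<phi> v\<bar> \<le> 3/2 * L * r" .
  moreover have "\<bar>inner (D\<phi> v) v\<bar> \<le> norm (D\<phi> v) * norm v" by (rule Cauchy_Schwarz_ineq2)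
  moreover have "norm (D\<phi> v) * norm v \<le> 3/2 * L * r"
    using norm_grad_le[OF nx] nv L_pos by (intro mult_mono) auto
  ultimately show "L * r \<le> gap" and "gap \<le> 7 * L * r"
    unfolding gap_def xv by auto
qed

lemma frontier_inner_normal_bounds:
  assumes x: "x \<in> frontier \<Omega> \<inter> ball 0 r"
  shows "r * L / 2 \<le> inner (x - (0, - (4 * L * r))) (graph_normal D\<phi> x)"
    and "inner (x - (0, - (4 * L * r))) (graph_normal D\<phi> x) \<le> 10 * r * L"
proof -
  let ?gap = "snd x + 4 * L * r - inner (D\<phi> (fst x)) (fst x)"
  let ?s = "sqrt (1 + (norm (D\<phi> (fst x)))\<^sup>2)"
  have inner_eq: "inner (x - (0, - (4 * L * r))) (graph_normal D\<phi> x) = ?gap / ?s"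
    using inner_graph_normal[of "fst x" "snd x + 4 * L * r" D\<phi> x] by (cases x) simp
  have "norm (fst x) \<le> R0" using x r_le norm_fst_le[of "fst x" "snd x"] by simp
  then have s: "1 \<le> ?s" "?s \<le> 3/2" using slope_le by auto
  have gap: "0 \<le> ?gap" "?gap \<le> 7 * L * r" "r * L / 2 \<le> ?gap / (3/2)"
    using frontier_support_gap[OF x] mult_pos_pos[OF L_pos r_pos] by (auto simp: field_simps)
  have s_mono: "?gap / (3/2) \<le> ?gap / ?s" "?gap / ?s \<le> ?gap / 1"
    using gap(1) s by (intro divide_left_mono; simp add: add_pos_nonneg)+
  then show "r * L / 2 \<le> inner (x - (0, - (4 * L * r))) (graph_normal D\<phi> x)"
    using inner_eq gap(3) by linarith
  have "7 * L * r \<le> 10 * r * L" using mult_pos_pos[OF L_pos r_pos] by simp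
  then show "inner (x - (0, - (4 * L * r))) (graph_normal D\<phi> x) \<le> 10 * r * L"
    using inner_eq gap(2) s_mono(2)[unfolded div_by_1] by linarith
qed

lemma segment_from_pole_in_Omega:
  defines "a \<equiv> 4 * L * r"
  assumes x: "x \<in> \<Omega>" and seg_r: "closed_segment (0, - a) x \<subseteq> ball 0 r"
  shows "closed_segment (0, - a) x \<subseteq> \<Omega>"
proof
  let ?y0 = "(0, - a) :: 'a \<times> real"
  obtain v xn where xv: "x = (v, xn)" by (cases x)
  have a: "0 < a" using L_pos r_pos by (simp add: a_def)
  have seg_point: "(1 - t) *\<^sub>R ?y0 + t *\<^sub>R x \<in> closed_segment ?y0 x" if "t \<in> {0..1}" for t
    using that by (auto simp: in_segment)
  have seg_R0: "norm ((1 - t) *\<^sub>R ?y0 + t *\<^sub>R x) < R0" if "t \<in> {0..1}" for t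
    using seg_r seg_point[OF that] r_le by fastforce
  have vR: "norm v \<le> R0"
    using seg_R0[of 1] norm_fst_le[of v xn] xv by simp
  have point: "(1 - t) *\<^sub>R ?y0 + t *\<^sub>R x = (t *\<^sub>R v, t * (xn + a) - a)" for t
    by (simp add: xv algebra_simps)
  define H where "H t = \<phi> (t *\<^sub>R v) - (t * (xn + a) - a)" for t
  define H' where "H' t = inner (D\<phi> (t *\<^sub>R v)) v - (xn + a)" for t
  have chart_t: "((1 - t) *\<^sub>R ?y0 + t *\<^sub>R x \<in> \<Omega> \<longleftrightarrow> t * (xn + a) - a < \<phi> (t *\<^sub>R v)) \<and>
      ((1 - t) *\<^sub>R ?y0 + t *\<^sub>R x \<in> frontier \<Omega> \<longleftrightarrow> t * (xn + a) - a = \<phi> (t *\<^sub>R v))"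
    if "t \<in> {0..1}" for t
    using in_chart_iff[OF seg_R0[OF that]] unfolding point by (simp only: fst_conv snd_conv)
  have in_\<Omega>_iff: "(1 - t) *\<^sub>R ?y0 + t *\<^sub>R x \<in> \<Omega> \<longleftrightarrow> 0 < H t"
    and in_frontier_iff: "(1 - t) *\<^sub>R ?y0 + t *\<^sub>R x \<in> frontier \<Omega> \<longleftrightarrow> H t = 0"
    if "t \<in> {0..1}" for t
    using chart_t[OF that] unfolding H_def by linarith+
  have H_pos: "0 < H t" if "t \<in> {0..1}" for t
  proof (rule positive_if_zeros_are_downcrossings[OF _ _ _ that])
    fix t :: real assume t: "t \<in> {0..1}"
    show "(H has_real_derivative H' t) (at t)"
      unfolding H_def H'_def
      by (intro DERIV_diff has_real_derivative_graph_ray[OF vR t]) (auto intro!: derivative_eq_intros)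
    assume "H t = 0"
    have "t \<noteq> 0" using \<open>H t = 0\<close> a by (auto simp: H_def graph_zero)
    have "(1 - t) *\<^sub>R ?y0 + t *\<^sub>R x \<in> frontier \<Omega> \<inter> ball 0 r"
      using in_frontier_iff[OF t] \<open>H t = 0\<close> seg_r seg_point[OF t] by auto
    moreover have "(1 - t) *\<^sub>R ?y0 + t *\<^sub>R x = (t *\<^sub>R v, \<phi> (t *\<^sub>R v))"
      unfolding point using \<open>H t = 0\<close> by (simp add: H_def)
    ultimately have "(t *\<^sub>R v, \<phi> (t *\<^sub>R v)) \<in> frontier \<Omega> \<inter> ball 0 r" by simp
    from frontier_support_gap(1)[OF this]
    have "0 < - t * H' t"
      using \<open>H t = 0\<close> mult_pos_pos[OF L_pos r_pos]
      by (simp add: H_def H'_def a_def algebra_simps inner_scaleR_right)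
    then show "H' t < 0" using t \<open>t \<noteq> 0\<close> by (simp add: mult_less_0_iff)
  next
    show "0 < H 1" using in_\<Omega>_iff[of 1] x by (simp add: zero_prod_def[symmetric])
  qed
  fix z assume "z \<in> closed_segment ?y0 x"
  then obtain t where t: "t \<in> {0..1}" and "z = (1 - t) *\<^sub>R ?y0 + t *\<^sub>R x"
    unfolding in_segment by auto
  then show "z \<in> \<Omega>" using in_\<Omega>_iff[OF t] H_pos[OF t] by simp
qed

lemma star_shaped_below_origin:
  defines "a \<equiv> 4 * L * r"
  shows "star_shaped_wrt (0, - a) (\<Omega> \<inter> ball (0, - a) (r - a))"
  unfolding star_shaped_wrt_def
proof (intro conjI ballI)
  let ?y0 = "(0, - a) :: 'a \<times> real"
  have a: "0 < a" "a < r" using L_pos L_small r_pos by (auto simp: a_def)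
  have "?y0 \<in> \<Omega>" using in_chart_iff[of ?y0] a r_le by (simp add: graph_zero)
  then show y0: "?y0 \<in> \<Omega> \<inter> ball ?y0 (r - a)" using a by simp
  fix x assume x: "x \<in> \<Omega> \<inter> ball ?y0 (r - a)"
  have seg_ball: "closed_segment ?y0 x \<subseteq> ball ?y0 (r - a)"
    using x y0 by (intro closed_segment_subset) auto
  also have "\<dots> \<subseteq> ball 0 r" using a by (simp add: ball_subset_ball_iff dist_norm)
  finally have "closed_segment ?y0 x \<subseteq> \<Omega>"
    using x unfolding a_def by (intro segment_from_pole_in_Omega) auto
  with seg_ball show "closed_segment ?y0 x \<subseteq> \<Omega> \<inter> ball ?y0 (r - a)" by blast
qed

end

theorem lemma3p2:
  fixes \<Omega> :: "('a::euclidean_space \<times> real) set"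
    and \<phi> :: "'a \<Rightarrow> real" and D\<phi> :: "'a \<Rightarrow> 'a"
    and R0 :: real and \<Lambda> :: "real \<Rightarrow> real"
  assumes dom: "C1_Dini_domain \<Omega>"
    and zero_bd: "(0, 0) \<in> frontier \<Omega>"
    and R0: "0 < R0" "R0 < 1"
    and deriv: "\<forall>x'\<in>cball 0 R0. (\<phi> has_derivative (\<lambda>h. inner (D\<phi> x') h)) (at x')"
    and dini: "dini_grad_on (cball 0 R0) D\<phi>"
    and graph: "\<forall>x. norm x < R0 \<longrightarrow>
                  (x \<in> \<Omega> \<longleftrightarrow> snd x < \<phi> (fst x)) \<and>
                  (x \<in> frontier \<Omega> \<longleftrightarrow> snd x = \<phi> (fst x))"
    and phi0: "\<phi> 0 = 0" and Dphi0: "D\<phi> 0 = 0"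
    and slope: "\<forall>x'\<in>cball 0 R0. sqrt (1 + (norm (D\<phi> x'))\<^sup>2) \<le> 3/2"
    and Lpos: "\<forall>r\<in>{0<..R0}. \<Lambda> r > 0"
    and Lmono: "mono_on {0<..R0} \<Lambda>"
    and Losc: "\<forall>r\<in>{0<..R0}. \<forall>x1\<in>frontier \<Omega> \<inter> ball 0 r. \<forall>x2\<in>frontier \<Omega> \<inter> ball 0 r.
                  norm (graph_normal D\<phi> x2 - graph_normal D\<phi> x1) \<le> \<Lambda> r"
    and Lsmall: "\<Lambda> R0 < 1/1000"
  shows "\<forall>r\<in>{0<..R0}.
           (let a = 4 * \<Lambda> r * r; y0 = (0, - a) :: 'a \<times> real in
              star_shaped_wrt y0 (\<Omega> \<inter> ball y0 (r - a)) \<and>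
              (\<forall>x\<in>frontier \<Omega> \<inter> ball 0 r.
                 r * \<Lambda> r / 2 \<le> inner (x - y0) (graph_normal D\<phi> x) \<and>
                 inner (x - y0) (graph_normal D\<phi> x) \<le> 10 * r * \<Lambda> r))"
proof
  fix r assume r: "r \<in> {0<..R0}"
  have "\<Lambda> r \<le> \<Lambda> R0" using mono_onD[OF Lmono r, of R0] r R0 by auto
  then interpret flat_graph_ball \<Omega> \<phi> D\<phi> R0 r "\<Lambda> r"
  proof unfold_locales
    show "0 < r" "r \<le> R0" using r by auto
    show "0 < \<Lambda> r" using Lpos r by blast
    show "\<Lambda> r < 1/4" using \<open>\<Lambda> r \<le> \<Lambda> R0\<close> Lsmall by simp
  qed (use deriv graph phi0 Dphi0 slope Losc r in blast)+
  show "let a = 4 * \<Lambda> r * r; y0 = (0, - a) :: 'a \<times> real in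
          star_shaped_wrt y0 (\<Omega> \<inter> ball y0 (r - a)) \<and>
          (\<forall>x\<in>frontier \<Omega> \<inter> ball 0 r.
             r * \<Lambda> r / 2 \<le> inner (x - y0) (graph_normal D\<phi> x) \<and>
             inner (x - y0) (graph_normal D\<phi> x) \<le> 10 * r * \<Lambda> r)"
    unfolding Let_def using star_shaped_below_origin frontier_inner_normal_bounds by blast
qed

end
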